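(* Let $\beta \in \mathcal{P}$ and $\alpha \in E$ satisfy $\alpha^{q+1} = \beta^q + \beta^{q^2+q+1}$. If $\alpha \neq 0$, then $\alpha^{q^2-1}\beta^{q+1} = 1$.
   Context: Let $q = 2^m$ with $m \ge 1$, and let $E = \mathbb{F}_{q^4}$. Define $\mathcal{P} = \{x \in E \mid x^{q^3+q^2+q+1} = 1\}$. *)

theory Defs
  imports Main
begin

text \<open>E = F_{q^4} is modelled as a finite field type 'a with CARD('a) = q^4, q = 2^m.
  The set P = {x in E. x^(q^3+q^2+q+1) = 1}.\<close>

definition P_set :: "nat \<Rightarrow> 'a::field set" where
  "P_set q = {x. x ^ (q^3 + q^2 + q + 1) = 1}"

end

theory Submission
  imports Defs "HOL-Number_Theory.Number_Theory"
begin

text \<open>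
  Put \<open>N = \<alpha>^(q+1)\<close>. Raising \<open>N = \<beta>^q + \<beta>^(q^2+q+1)\<close> to the \<open>q\<close>-th power is additive
  in characteristic 2, and using \<open>\<beta>^(q^3+q^2+q+1) = 1\<close> one finds \<open>N^q \<beta>^(q+1) = N\<close>.
  On the other hand \<open>N^q = \<alpha>^(q^2+q) = \<alpha>^(q^2-1) N\<close>, so cancelling \<open>N \<noteq> 0\<close> gives the claim.
\<close>

lemma CHAR_eq_if_card_eq_prime_power:
  assumes "prime p" and "card (UNIV :: 'a::{idom,finite} set) = p ^ k"
  shows "CHAR('a) = p"
proof -
  have "prime CHAR('a)"
    by (simp add: finite_imp_CHAR_pos prime_CHAR_semidom)
  moreover have "CHAR('a) dvd p ^ k"
    using CHAR_dvd_CARD[where 'a='a] assms(2) by simp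
  ultimately show ?thesis
    using assms(1) by (metis prime_dvd_power primes_dvd_imp_eq)
qed

lemma power_q_mul_power_eq_self:
  fixes \<beta> :: "'a::comm_ring_1"
  assumes additive: "\<And>x y :: 'a. (x + y) ^ q = x ^ q + y ^ q"
    and norm: "\<beta> ^ (q^3 + q^2 + q + 1) = 1"
    and N: "N = \<beta> ^ q + \<beta> ^ (q^2 + q + 1)"
  shows "N ^ q * \<beta> ^ (q + 1) = N"
proof -
  have "N ^ q = \<beta> ^ (q^2) + \<beta> ^ (q^3 + q^2 + q)"
    unfolding N additive
    by (simp only: power_mult[symmetric]) (simp add: power2_eq_square power3_eq_cube algebra_simps)
  then have "N ^ q * \<beta> ^ (q + 1) = \<beta> ^ (q^2 + q + 1) + \<beta> ^ (q^3 + q^2 + q + 1) * \<beta> ^ q"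
    by (simp add: distrib_right power_add[symmetric] algebra_simps)
  also have "\<dots> = N"
    using norm N by simp
  finally show ?thesis .
qed

theorem lemma2p2:
  fixes \<alpha> \<beta> :: "'a::{field,finite}" and m q :: nat
  assumes "m \<ge> 1" and "q = 2 ^ m" and "card (UNIV :: 'a set) = q ^ 4"
    and "\<beta> \<in> P_set q"
    and "\<alpha> ^ (q + 1) = \<beta> ^ q + \<beta> ^ (q^2 + q + 1)"
    and "\<alpha> \<noteq> 0"
  shows "\<alpha> ^ (q^2 - 1) * \<beta> ^ (q + 1) = 1"
proof -
  define N where "N = \<alpha> ^ (q + 1)"
  have "CHAR('a) = 2"
    using assms(2,3) by (intro CHAR_eq_if_card_eq_prime_power[where k = "m * 4"])
      (simp_all add: power_mult)
  then have additive: "(x + y) ^ q = x ^ q + y ^ q" for x y :: 'a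
    using assms(2) by (intro freshmans_dream') simp_all
  have fixed: "N ^ q * \<beta> ^ (q + 1) = N"
    using assms(4,5) by (intro power_q_mul_power_eq_self[OF additive]) (simp_all add: P_set_def N_def)
  have "q^2 - 1 + (q + 1) = q * (q + 1)"
    using assms(2) by (simp add: power2_eq_square algebra_simps)
  then have "\<alpha> ^ (q^2 - 1) * N = N ^ q"
    unfolding N_def by (metis power_add power_mult mult.commute)
  then have "\<alpha> ^ (q^2 - 1) * \<beta> ^ (q + 1) * N = N ^ q * \<beta> ^ (q + 1)"
    by (simp add: ac_simps)
  also have "\<dots> = 1 * N"
    using fixed by simp
  finally have "\<alpha> ^ (q^2 - 1) * \<beta> ^ (q + 1) * N = 1 * N" .
  moreover have "N \<noteq> 0"
    using assms(6) by (simp add: N_def)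
  ultimately show ?thesis
    by (metis mult_right_cancel)
qed

end
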